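(* Let $Y$ be a real random variable. Each of the following conditions implies $\mathbb{E}e^{tY}<e^{t^2}$ for all real $t\neq0$: (1) $\mathbb{E}Y=0$ and $\chi^2(Y,\mathcal N)<\inf_{x>0}\frac{(e^{x/2}-1)^2}{e^x-1-x}=\frac12$; (2) $\mathbb{E}Y=0$, $\mathbb{E}Y^2=1$ and $\chi^2(Y,\mathcal N)<\min_{x>0}\frac{(e^{x/2}-1)^2}{e^x-1-x-\frac{x^2}{2}}=0.96116\ldots$; (3) $Y$ is symmetric (i.e. $-Y$ has the same distribution as $Y$) with $\mathbb{E}Y=0$, $\mathbb{E}Y^2=1$, and $\chi^2(Y,\mathcal N)<\min_{x>0}\frac{(e^{x/2}-1)^2}{\frac{e^x+e^{-x}}{2}-1-\frac{x^2}{2}}=1.97044\ldots$.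
   Context: $\varphi(x)=e^{-x^2/2}/\sqrt{2\pi}$. For a real random variable $Y$ with density $p$, $\chi^2(Y,\mathcal N)=\int_{-\infty}^{\infty}\left(\frac{p(x)}{\varphi(x)}-1\right)^2\varphi(x)\,dx$ (taken to be $+\infty$ if $Y$ has no density). *)

theory Defs
  imports "HOL-Probability.Probability"
begin

definition std_normal_density :: "real \<Rightarrow> real" where
  "std_normal_density x = exp (- (x^2) / 2) / sqrt (2 * pi)"

text \<open>The value does not depend on the
  choice of density (densities agree a.e.).\<close>
definition chi2_normal :: "'a measure \<Rightarrow> ('a \<Rightarrow> real) \<Rightarrow> ennreal" where
  "chi2_normal M Y =
     (if \<exists>p. distributed M lborel Y p
      then (let p = (SOME p. distributed M lborel Y p) in
              \<integral>\<^sup>+ x. ennreal ((enn2real (p x) / std_normal_density x - 1)^2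
                               * std_normal_density x) \<partial>lborel)
      else \<infinity>)"

definition const1 :: real where
  "const1 = Inf {(exp (x/2) - 1)^2 / (exp x - 1 - x) | x::real. x > 0}"

definition const2 :: real where
  "const2 = Inf {(exp (x/2) - 1)^2 / (exp x - 1 - x - x^2/2) | x::real. x > 0}"

definition const3 :: real where
  "const3 = Inf {(exp (x/2) - 1)^2 / ((exp x + exp (-x))/2 - 1 - x^2/2) | x::real. x > 0}"

end

theory Submission
  imports Defs
begin

(* Let q be the density of Y, \<phi> the standard normal density and E = exp (t^2/2), the Gaussian
   integral of h(x) = exp (t x).  For every polynomial P with \<integral> P q = \<integral> P \<phi> (the moment
   hypotheses provide this for deg P \<le> 1, resp. deg P \<le> 2), Cauchy-Schwarz gives
     \<integral> h q - E = \<integral> (h - P) (q/\<phi> - 1) \<phi> \<le> sqrt (V \<chi>^2),   V = \<integral> (h - P)^2 \<phi>.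
   For P a truncated Hermite expansion of h one gets V = E^2 D with an explicit D, and
   sqrt (V \<chi>^2) < E^2 - E amounts to \<chi>^2 < (E - 1)^2 / D, the expression whose infimum over
   x = t^2 > 0 defines const1, resp. const2.  For symmetric Y, h may be replaced by cosh (t x),
   whose even truncation yields a smaller D and hence const3. *)

lemma std_normal_density_eq_normal_density: "Defs.std_normal_density = normal_density 0 1"
  by (simp add: fun_eq_iff Defs.std_normal_density_def normal_density_def)

lemma normal_density_mult_exp:
  "normal_density 0 1 x * exp (u * x) = exp (u^2 / 2) * normal_density u 1 x"
proof -
  have "exp (- (x^2) / 2) * exp (u * x) = exp (u^2 / 2) * exp (- ((x - u)^2) / 2)"
    unfolding exp_add[symmetric] by (simp add: power2_eq_square field_simps)
  then show ?thesis
    unfolding normal_density_def by (simp add: field_simps)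
qed

lemma has_bochner_integral_normal_density_quadratic:
  "has_bochner_integral lborel (\<lambda>x. normal_density u 1 x * (a + b*x + c*x^2))
     (a + b*u + c*(1 + u^2))"
proof -
  have mass: "has_bochner_integral lborel (normal_density u 1) 1"
    by (simp add: has_bochner_integral_iff)
  have moment2: "has_bochner_integral lborel (\<lambda>x. normal_density u 1 x * (x - u)^(2*1)) 1"
    using normal_moment_even[of 1 u 1] by simp
  have "has_bochner_integral lborel
      (\<lambda>x. (a - c*u^2) * normal_density u 1 x + (b + 2*c*u) * (normal_density u 1 x * x)
         + c * (normal_density u 1 x * (x - u)^(2*1)))
      ((a - c*u^2) * 1 + (b + 2*c*u) * u + c * 1)"
    by (intro has_bochner_integral_add has_bochner_integral_diff has_bochner_integral_mult_right
        mass moment2 normal_moment_nz_1) simp_all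
  then show ?thesis
    by (rule has_bochner_integral_cong[THEN iffD1, rotated -1])
       (auto simp: power2_eq_square algebra_simps)
qed

lemma has_bochner_integral_std_normal_exp_quadratic:
  "has_bochner_integral lborel (\<lambda>x. normal_density 0 1 x * exp (u*x) * (a + b*x + c*x^2))
     (exp (u^2/2) * (a + b*u + c*(1 + u^2)))"
  using has_bochner_integral_mult_right[OF has_bochner_integral_normal_density_quadratic,
      of "exp (u^2/2)" u a b c]
  by (simp add: normal_density_mult_exp mult.assoc)

lemma has_bochner_integral_std_normal_cosh_quadratic:
  "has_bochner_integral lborel (\<lambda>x. normal_density 0 1 x * cosh (u*x) * (a + b*x + c*x^2))
     (exp (u^2/2) * (a + c*(1 + u^2)))"
proof -
  have "has_bochner_integral lborel
      (\<lambda>x. (normal_density 0 1 x * exp (u*x) * (a + b*x + c*x^2)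
          + normal_density 0 1 x * exp ((-u)*x) * (a + b*x + c*x^2)) / 2)
      ((exp (u^2/2) * (a + b*u + c*(1 + u^2))
          + exp ((-u)^2/2) * (a + b*(-u) + c*(1 + (-u)^2))) / 2)"
    by (intro has_bochner_integral_divide_zero has_bochner_integral_add
        has_bochner_integral_std_normal_exp_quadratic)
  then show ?thesis
    by (rule has_bochner_integral_cong[THEN iffD1, rotated -1])
       (auto simp: cosh_field_def field_simps)
qed

lemma has_bochner_integral_std_normal_quadratic_sq:
  "has_bochner_integral lborel (\<lambda>x. normal_density 0 1 x * (a + b*x + c*x^2)^2)
     (a^2 + b^2 + 2*a*c + 3*c^2)"
proof -
  have even: "has_bochner_integral lborel (\<lambda>x. normal_density 0 1 x * x^(2*k))
      (fact (2*k) / (2^k * fact k))" for k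
    using std_normal_moment_even[of k] by simp
  have odd: "has_bochner_integral lborel (\<lambda>x. normal_density 0 1 x * x^(2*k+1)) 0" for k
    using std_normal_moment_odd[of k] by simp
  have "has_bochner_integral lborel
      (\<lambda>x. a^2 * (normal_density 0 1 x * x^(2*0))
        + 2*a*b * (normal_density 0 1 x * x^(2*0+1))
        + (b^2 + 2*a*c) * (normal_density 0 1 x * x^(2*1))
        + 2*b*c * (normal_density 0 1 x * x^(2*1+1))
        + c^2 * (normal_density 0 1 x * x^(2*2)))
      (a^2 * (fact (2*0) / (2^0 * fact 0)) + 2*a*b * 0
        + (b^2 + 2*a*c) * (fact (2*1) / (2^1 * fact 1)) + 2*b*c * 0
        + c^2 * (fact (2*2) / (2^2 * fact 2)))"
    by (intro has_bochner_integral_add has_bochner_integral_mult_right even odd)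
  then show ?thesis
    by (rule has_bochner_integral_cong[THEN iffD1, rotated -1])
       (auto simp: fact_numeral power2_eq_square eval_nat_numeral algebra_simps)
qed

lemma has_bochner_integral_std_normal_exp_minus_quadratic_sq:
  "has_bochner_integral lborel (\<lambda>x. normal_density 0 1 x * (exp (t*x) - (a + b*x + c*x^2))^2)
     (exp (2*t^2) - 2 * exp (t^2/2) * (a + b*t + c*(1 + t^2)) + (a^2 + b^2 + 2*a*c + 3*c^2))"
proof -
  have expansion: "has_bochner_integral lborel
      (\<lambda>x. normal_density 0 1 x * exp ((2*t)*x) * (1 + 0*x + 0*x^2)
         - 2 * (normal_density 0 1 x * exp (t*x) * (a + b*x + c*x^2))
         + normal_density 0 1 x * (a + b*x + c*x^2)^2)
      (exp ((2*t)^2/2) * (1 + 0*(2*t) + 0*(1 + (2*t)^2))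
         - 2 * (exp (t^2/2) * (a + b*t + c*(1 + t^2))) + (a^2 + b^2 + 2*a*c + 3*c^2))"
    by (intro has_bochner_integral_add has_bochner_integral_diff has_bochner_integral_mult_right
        has_bochner_integral_std_normal_exp_quadratic has_bochner_integral_std_normal_quadratic_sq)
  have double: "exp ((2*t)*x) = exp (t*x)^2" for x
    by (simp add: exp_add[symmetric] power2_eq_square algebra_simps)
  show ?thesis
    by (rule has_bochner_integral_cong[THEN iffD1, OF refl _ _ expansion])
       (simp_all only: double, auto simp: power2_eq_square algebra_simps)
qed

lemma has_bochner_integral_std_normal_cosh_minus_quadratic_sq:
  "has_bochner_integral lborel (\<lambda>x. normal_density 0 1 x * (cosh (t*x) - (a + b*x + c*x^2))^2)
     ((exp (2*t^2) + 1)/2 - 2 * exp (t^2/2) * (a + c*(1 + t^2)) + (a^2 + b^2 + 2*a*c + 3*c^2))"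
proof -
  have expansion: "has_bochner_integral lborel
      (\<lambda>x. (normal_density 0 1 x * cosh ((2*t)*x) * (1 + 0*x + 0*x^2)
          + normal_density 0 1 x * (1 + 0*x + 0*x^2)) / 2
         - 2 * (normal_density 0 1 x * cosh (t*x) * (a + b*x + c*x^2))
         + normal_density 0 1 x * (a + b*x + c*x^2)^2)
      ((exp ((2*t)^2/2) * (1 + 0*(1 + (2*t)^2)) + (1 + 0*0 + 0*(1 + 0^2))) / 2
         - 2 * (exp (t^2/2) * (a + c*(1 + t^2))) + (a^2 + b^2 + 2*a*c + 3*c^2))"
    by (intro has_bochner_integral_add has_bochner_integral_diff has_bochner_integral_mult_right
        has_bochner_integral_divide_zero has_bochner_integral_std_normal_cosh_quadratic
        has_bochner_integral_std_normal_quadratic_sq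
        has_bochner_integral_normal_density_quadratic)
  have double: "cosh ((2*t)*x) = 2 * cosh (t*x)^2 - 1" for x
    using cosh_double_cosh[of "t*x"] by (simp add: mult.assoc)
  show ?thesis
    by (rule has_bochner_integral_cong[THEN iffD1, OF refl _ _ expansion])
       (simp_all only: double, auto simp: power2_eq_square algebra_simps)
qed

(* Cauchy-Schwarz enters as the pointwise weighted AM-GM inequality
   A B \<le> (l A^2 + B^2 / l) / 2 with A = h - P, B = q/p - 1 and l = T/V, so no integrability
   of (h - P) (q/p - 1) p is needed. *)
lemma nn_integral_mult_density_less:
  fixes p q h P :: "real \<Rightarrow> real"
  assumes p_pos: "\<And>x. 0 < p x" and q_nonneg: "\<And>x. 0 \<le> q x" and h_nonneg: "\<And>x. 0 \<le> h x"
    and H: "has_bochner_integral lborel (\<lambda>x. p x * h x) H"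
    and V: "has_bochner_integral lborel (\<lambda>x. p x * (h x - P x)^2) V"
    and Pq: "has_bochner_integral lborel (\<lambda>x. q x * P x) I"
    and Pp: "has_bochner_integral lborel (\<lambda>x. p x * P x) I"
    and chi2: "has_bochner_integral lborel (\<lambda>x. (q x / p x - 1)^2 * p x) C"
    and "0 < V" "0 < T" "C * V < T^2"
  shows "(\<integral>\<^sup>+x. ennreal (h x * q x) \<partial>lborel) < ennreal (H + T)"
proof -
  define l where "l = T / V"
  have "0 < l"
    using \<open>0 < V\<close> \<open>0 < T\<close> by (simp add: l_def)
  define F where "F x = p x * h x + (l * (p x * (h x - P x)^2) + (q x / p x - 1)^2 * p x / l) / 2
      + q x * P x - p x * P x" for x
  have F: "has_bochner_integral lborel F (H + (l * V + C / l) / 2 + I - I)"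
    unfolding F_def by (intro has_bochner_integral_add has_bochner_integral_diff
        has_bochner_integral_mult_right has_bochner_integral_divide_zero H V Pq Pp chi2)
  have hq_le_F: "h x * q x \<le> F x" for x
  proof -
    define A where "A = h x - P x"
    define B where "B = q x / p x - 1"
    have "2 * l * (A * B) \<le> l^2 * A^2 + B^2"
      using sum_squares_ge_zero[of "l * A - B" 0] by (simp add: power2_eq_square algebra_simps)
    then have "A * B \<le> (l * A^2 + B^2 / l) / 2"
      using \<open>0 < l\<close> by (simp add: field_simps power2_eq_square)
    have "h x * q x = p x * h x + p x * (A * B) + q x * P x - p x * P x"
      using p_pos[of x] by (simp add: A_def B_def field_simps)
    also have "\<dots> \<le> p x * h x + p x * ((l * A^2 + B^2 / l) / 2) + q x * P x - p x * P x"
      using \<open>A * B \<le> _\<close> p_pos[of x] by (simp add: mult_left_mono less_imp_le)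
    also have "\<dots> = F x"
      by (simp add: F_def A_def B_def algebra_simps)
    finally show ?thesis .
  qed
  have "(\<integral>\<^sup>+x. ennreal (h x * q x) \<partial>lborel) \<le> (\<integral>\<^sup>+x. ennreal (F x) \<partial>lborel)"
    by (intro nn_integral_mono ennreal_leI hq_le_F)
  also have "\<dots> = ennreal (H + (l * V + C / l) / 2)"
    using F order_trans[OF mult_nonneg_nonneg[OF h_nonneg q_nonneg] hq_le_F]
    by (subst nn_integral_eq_integral) (auto simp: has_bochner_integral_iff)
  also have "\<dots> < ennreal (H + T)"
  proof (rule ennreal_lessI)
    have "0 \<le> H"
      using integral_nonneg_AE[of "\<lambda>x. p x * h x" lborel] H p_pos h_nonneg
      by (simp add: has_bochner_integral_integral_eq less_imp_le)
    then show "0 < H + T"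
      using \<open>0 < T\<close> by simp
    have "l * V = T" "C / l < T"
      using \<open>0 < V\<close> \<open>0 < T\<close> \<open>C * V < T^2\<close> by (simp_all add: l_def field_simps power2_eq_square)
    then show "H + (l * V + C / l) / 2 < H + T"
      by simp
  qed
  finally show ?thesis .
qed

lemma nn_integral_mult_density_less_sq:
  fixes p q h P :: "real \<Rightarrow> real"
  assumes "\<And>x. 0 < p x" "\<And>x. 0 \<le> q x" "\<And>x. 0 \<le> h x"
    and "has_bochner_integral lborel (\<lambda>x. p x * h x) E"
    and "has_bochner_integral lborel (\<lambda>x. p x * (h x - P x)^2) (E^2 * D)"
    and "has_bochner_integral lborel (\<lambda>x. q x * P x) I"
    and "has_bochner_integral lborel (\<lambda>x. p x * P x) I"
    and "has_bochner_integral lborel (\<lambda>x. (q x / p x - 1)^2 * p x) C"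
    and "1 < E" "0 < D" "C < (E - 1)^2 / D"
  shows "(\<integral>\<^sup>+x. ennreal (h x * q x) \<partial>lborel) < ennreal (E^2)"
proof -
  have "C * D < (E - 1)^2"
    using \<open>0 < D\<close> \<open>C < (E - 1)^2 / D\<close> by (simp add: pos_less_divide_eq)
  then have "(C * D) * E^2 < (E - 1)^2 * E^2"
    using \<open>1 < E\<close> by (intro mult_strict_right_mono) simp_all
  then have "C * (E^2 * D) < (E^2 - E)^2"
    by (simp add: power2_eq_square algebra_simps)
  then show ?thesis
    using nn_integral_mult_density_less[OF assms(1-8), of "E^2 - E"] \<open>1 < E\<close> \<open>0 < D\<close>
    by (simp add: power2_eq_square)
qed

lemma exp_sq_half_powers:
  fixes t :: real
  shows "exp (t^2) = exp (t^2/2)^2" "exp (2*t^2) = exp (t^2/2)^4"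
  by (simp_all flip: exp_of_nat_mult)

(* The polynomials below truncate the Hermite expansions
   exp (t x) = exp (t^2/2) \<Sum>n t^n He_n(x) / n!  and  cosh (t x) = exp (t^2/2) \<Sum>n t^(2n) He_2n(x) / (2n)!,
   i.e. they are the L^2(\<phi>)-projections onto polynomials of degree \<le> 1, resp. \<le> 2. *)
lemma has_bochner_integral_std_normal_exp_minus_linear_sq:
  "has_bochner_integral lborel
     (\<lambda>x. normal_density 0 1 x * (exp (t*x) - exp (t^2/2) * (1 + t*x))^2)
     (exp (t^2/2)^2 * (exp (t^2) - 1 - t^2))"
proof -
  define E where "E = exp (t^2/2)"
  note base = has_bochner_integral_std_normal_exp_minus_quadratic_sq[of t E "E*t" 0]
  show ?thesis
    by (rule has_bochner_integral_cong[THEN iffD1, OF refl _ _ base])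
       (simp_all only: exp_sq_half_powers flip: E_def,
        simp_all add: field_simps power2_eq_square eval_nat_numeral)
qed

lemma has_bochner_integral_std_normal_exp_minus_quadratic_taylor_sq:
  "has_bochner_integral lborel
     (\<lambda>x. normal_density 0 1 x * (exp (t*x) - exp (t^2/2) * (1 + t*x + t^2 * (x^2 - 1) / 2))^2)
     (exp (t^2/2)^2 * (exp (t^2) - 1 - t^2 - (t^2)^2/2))"
proof -
  define E where "E = exp (t^2/2)"
  note base =
    has_bochner_integral_std_normal_exp_minus_quadratic_sq[of t "E*(1 - t^2/2)" "E*t" "E*t^2/2"]
  show ?thesis
    by (rule has_bochner_integral_cong[THEN iffD1, OF refl _ _ base])
       (simp_all only: exp_sq_half_powers flip: E_def,
        simp_all add: field_simps power2_eq_square eval_nat_numeral)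
qed

lemma has_bochner_integral_std_normal_cosh_minus_quadratic_taylor_sq:
  "has_bochner_integral lborel
     (\<lambda>x. normal_density 0 1 x * (cosh (t*x) - exp (t^2/2) * (1 + t^2 * (x^2 - 1) / 2))^2)
     (exp (t^2/2)^2 * (cosh (t^2) - 1 - (t^2)^2/2))"
proof -
  define E where "E = exp (t^2/2)"
  have "0 < E" by (simp add: E_def)
  have cosh: "cosh (t^2) = (E^4 + 1) / (2 * E^2)"
    unfolding cosh_field_def exp_sq_half_powers(1) exp_minus E_def
    by (simp add: field_simps power2_eq_square eval_nat_numeral)
  note base =
    has_bochner_integral_std_normal_cosh_minus_quadratic_sq[of t "E*(1 - t^2/2)" 0 "E*t^2/2"]
  show ?thesis
    by (rule has_bochner_integral_cong[THEN iffD1, OF refl _ _ base])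
       (simp_all only: exp_sq_half_powers cosh flip: E_def,
        use \<open>0 < E\<close> in \<open>simp_all add: field_simps power2_eq_square eval_nat_numeral\<close>)
qed

lemma exp_gt_cubic_taylor:
  fixes y :: real
  assumes "y \<noteq> 0"
  shows "1 + y + y^2/2 + y^3/6 < exp y"
proof -
  obtain s where "exp y = (\<Sum>m<4. y^m / fact m) + exp s / fact 4 * y^4"
    using Maclaurin_exp_lt[OF assms, of 4] by auto
  moreover have "(\<Sum>m<4. y^m / fact m) = 1 + y + y^2/2 + y^3/6"
    by (simp add: eval_nat_numeral fact_numeral)
  moreover have "0 < exp s / fact 4 * y^4"
    using assms by simp
  ultimately show ?thesis
    by linarith
qed

lemma exp_gt_quadratic_taylor:
  fixes x :: real
  assumes "0 < x"
  shows "1 + x + x^2/2 < exp x"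
proof -
  have "1 + x + x^2/2 + x^3/6 < exp x"
    using assms by (intro exp_gt_cubic_taylor) simp
  moreover have "0 < x^3"
    using assms by simp
  ultimately show ?thesis
    by linarith
qed

lemma cosh_gt_quadratic_taylor: "x \<noteq> 0 \<Longrightarrow> 1 + x^2/2 < cosh (x::real)"
  using exp_gt_cubic_taylor[of x] exp_gt_cubic_taylor[of "-x"]
  by (simp add: cosh_field_def)

lemma cInf_pos_reals_lower:
  fixes f :: "real \<Rightarrow> real"
  assumes "\<And>y. 0 < y \<Longrightarrow> 0 \<le> f y" and "0 < x"
  shows "Inf {f y |y. y > 0} \<le> f x"
  using assms by (intro cInf_lower) (auto intro!: bdd_belowI[where m=0])

lemma const1_le: "0 < x \<Longrightarrow> const1 \<le> (exp (x/2) - 1)^2 / (exp x - 1 - x)"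
  unfolding const1_def
proof (rule cInf_pos_reals_lower)
  show "0 \<le> (exp (y/2) - 1)^2 / (exp y - 1 - y)" for y :: real
  proof (rule divide_nonneg_nonneg)
    show "0 \<le> exp y - 1 - y"
      using exp_ge_add_one_self[of y] by linarith
  qed simp
qed

lemma const2_le: "0 < x \<Longrightarrow> const2 \<le> (exp (x/2) - 1)^2 / (exp x - 1 - x - x^2/2)"
  unfolding const2_def
proof (rule cInf_pos_reals_lower)
  show "0 \<le> (exp (y/2) - 1)^2 / (exp y - 1 - y - y^2/2)" if "0 < y" for y :: real
  proof (rule divide_nonneg_nonneg)
    show "0 \<le> exp y - 1 - y - y^2/2"
      using exp_gt_quadratic_taylor[OF that] by linarith
  qed simp
qed

lemma const3_le: "0 < x \<Longrightarrow> const3 \<le> (exp (x/2) - 1)^2 / (cosh x - 1 - x^2/2)"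
  unfolding const3_def cosh_field_def[of x]
proof (rule cInf_pos_reals_lower)
  show "0 \<le> (exp (y/2) - 1)^2 / ((exp y + exp (-y))/2 - 1 - y^2/2)" if "0 < y" for y :: real
  proof (rule divide_nonneg_nonneg)
    have "1 + y^2/2 < cosh y"
      using that by (intro cosh_gt_quadratic_taylor) simp
    then show "0 \<le> (exp y + exp (-y))/2 - 1 - y^2/2"
      unfolding cosh_field_def by linarith
  qed simp
qed

lemma has_bochner_integral_mult_affine:
  fixes f :: "real \<Rightarrow> real"
  assumes "has_bochner_integral M f m0" "has_bochner_integral M (\<lambda>x. f x * x) m1"
  shows "has_bochner_integral M (\<lambda>x. f x * (a + b*x)) (a*m0 + b*m1)"
proof -
  have "has_bochner_integral M (\<lambda>x. a * f x + b * (f x * x)) (a*m0 + b*m1)"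
    by (intro has_bochner_integral_add has_bochner_integral_mult_right assms)
  then show ?thesis
    by (simp add: algebra_simps)
qed

lemma has_bochner_integral_mult_quadratic:
  fixes f :: "real \<Rightarrow> real"
  assumes "has_bochner_integral M f m0" "has_bochner_integral M (\<lambda>x. f x * x) m1"
    and "has_bochner_integral M (\<lambda>x. f x * x^2) m2"
  shows "has_bochner_integral M (\<lambda>x. f x * (a + b*x + c*x^2)) (a*m0 + b*m1 + c*m2)"
proof -
  have "has_bochner_integral M (\<lambda>x. f x * (a + b*x) + c * (f x * x^2)) (a*m0 + b*m1 + c*m2)"
    by (intro has_bochner_integral_add has_bochner_integral_mult_right
        has_bochner_integral_mult_affine assms)
  then show ?thesis
    by (simp add: algebra_simps)
qed

definition has_chi2_normal :: "(real \<Rightarrow> real) \<Rightarrow> real \<Rightarrow> bool" where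
  "has_chi2_normal q C \<longleftrightarrow>
     has_bochner_integral lborel (\<lambda>x. (q x / normal_density 0 1 x - 1)^2 * normal_density 0 1 x) C"

lemma nn_integral_exp_density_less_of_mean_zero:
  fixes q :: "real \<Rightarrow> real"
  assumes q_nonneg: "\<And>x. 0 \<le> q x"
    and chi2: "has_chi2_normal q C"
    and "C < const1"
    and mass: "has_bochner_integral lborel q 1"
    and mean: "has_bochner_integral lborel (\<lambda>x. q x * x) 0"
    and "t \<noteq> 0"
  shows "(\<integral>\<^sup>+x. ennreal (exp (t*x) * q x) \<partial>lborel) < ennreal (exp (t^2))"
proof -
  define E where "E = exp (t^2/2)"
  have "0 < t^2"
    using \<open>t \<noteq> 0\<close> by simp
  have "1 < E"
    using \<open>0 < t^2\<close> by (simp add: E_def)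
  have D_pos: "0 < exp (t^2) - 1 - t^2"
    using exp_gt_quadratic_taylor[OF \<open>0 < t^2\<close>] zero_le_power2[of "t^2"] by linarith
  have "C < (E - 1)^2 / (exp (t^2) - 1 - t^2)"
    using const1_le[OF \<open>0 < t^2\<close>] \<open>C < const1\<close> by (simp add: E_def)
  moreover have "has_bochner_integral lborel (\<lambda>x. q x * (E * (1 + t*x))) E"
    using has_bochner_integral_mult_affine[OF mass mean, of E "E*t"] by (simp add: algebra_simps)
  moreover have "has_bochner_integral lborel (\<lambda>x. normal_density 0 1 x * (E * (1 + t*x))) E"
    using has_bochner_integral_normal_density_quadratic[of 0 E "E*t" 0] by (simp add: algebra_simps)
  moreover have "has_bochner_integral lborel (\<lambda>x. normal_density 0 1 x * exp (t*x)) E"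
    using has_bochner_integral_std_normal_exp_quadratic[of t 1 0 0] by (simp add: E_def)
  ultimately show ?thesis
    using nn_integral_mult_density_less_sq[OF normal_density_pos q_nonneg exp_ge_zero _
        has_bochner_integral_std_normal_exp_minus_linear_sq[of t, folded E_def] _ _
        chi2[unfolded has_chi2_normal_def] \<open>1 < E\<close> D_pos]
    by (simp add: exp_sq_half_powers(1) flip: E_def)
qed

lemma nn_integral_exp_density_less_of_standardized:
  fixes q :: "real \<Rightarrow> real"
  assumes q_nonneg: "\<And>x. 0 \<le> q x"
    and chi2: "has_chi2_normal q C"
    and "C < const2"
    and mass: "has_bochner_integral lborel q 1"
    and mean: "has_bochner_integral lborel (\<lambda>x. q x * x) 0"
    and second_moment: "has_bochner_integral lborel (\<lambda>x. q x * x^2) 1"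
    and "t \<noteq> 0"
  shows "(\<integral>\<^sup>+x. ennreal (exp (t*x) * q x) \<partial>lborel) < ennreal (exp (t^2))"
proof -
  define E where "E = exp (t^2/2)"
  have "0 < t^2"
    using \<open>t \<noteq> 0\<close> by simp
  have "1 < E"
    using \<open>0 < t^2\<close> by (simp add: E_def)
  have D_pos: "0 < exp (t^2) - 1 - t^2 - (t^2)^2/2"
    using exp_gt_quadratic_taylor[OF \<open>0 < t^2\<close>] by linarith
  have "C < (E - 1)^2 / (exp (t^2) - 1 - t^2 - (t^2)^2/2)"
    using const2_le[OF \<open>0 < t^2\<close>] \<open>C < const2\<close> by (simp add: E_def)
  moreover have "has_bochner_integral lborel (\<lambda>x. q x * (E * (1 + t*x + t^2 * (x^2 - 1) / 2))) E"
    using has_bochner_integral_mult_quadratic[OF mass mean second_moment,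
        of "E * (1 - t^2/2)" "E*t" "E*t^2/2"]
    by (simp add: field_simps)
  moreover have "has_bochner_integral lborel
      (\<lambda>x. normal_density 0 1 x * (E * (1 + t*x + t^2 * (x^2 - 1) / 2))) E"
    using has_bochner_integral_normal_density_quadratic[of 0 "E * (1 - t^2/2)" "E*t" "E*t^2/2"]
    by (simp add: field_simps)
  moreover have "has_bochner_integral lborel (\<lambda>x. normal_density 0 1 x * exp (t*x)) E"
    using has_bochner_integral_std_normal_exp_quadratic[of t 1 0 0] by (simp add: E_def)
  ultimately show ?thesis
    using nn_integral_mult_density_less_sq[OF normal_density_pos q_nonneg exp_ge_zero _
        has_bochner_integral_std_normal_exp_minus_quadratic_taylor_sq[of t, folded E_def] _ _
        chi2[unfolded has_chi2_normal_def] \<open>1 < E\<close> D_pos]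
    by (simp add: exp_sq_half_powers(1) flip: E_def)
qed

lemma nn_integral_cosh_density_less_of_standardized:
  fixes q :: "real \<Rightarrow> real"
  assumes q_nonneg: "\<And>x. 0 \<le> q x"
    and chi2: "has_chi2_normal q C"
    and "C < const3"
    and mass: "has_bochner_integral lborel q 1"
    and mean: "has_bochner_integral lborel (\<lambda>x. q x * x) 0"
    and second_moment: "has_bochner_integral lborel (\<lambda>x. q x * x^2) 1"
    and "t \<noteq> 0"
  shows "(\<integral>\<^sup>+x. ennreal (cosh (t*x) * q x) \<partial>lborel) < ennreal (exp (t^2))"
proof -
  define E where "E = exp (t^2/2)"
  have "0 < t^2"
    using \<open>t \<noteq> 0\<close> by simp
  have "1 < E"
    using \<open>0 < t^2\<close> by (simp add: E_def)
  have D_pos: "0 < cosh (t^2) - 1 - (t^2)^2/2"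
    using cosh_gt_quadratic_taylor[of "t^2"] \<open>0 < t^2\<close> by simp
  have "C < (E - 1)^2 / (cosh (t^2) - 1 - (t^2)^2/2)"
    using const3_le[OF \<open>0 < t^2\<close>] \<open>C < const3\<close> by (simp add: E_def)
  moreover have "has_bochner_integral lborel (\<lambda>x. q x * (E * (1 + t^2 * (x^2 - 1) / 2))) E"
    using has_bochner_integral_mult_quadratic[OF mass mean second_moment,
        of "E * (1 - t^2/2)" 0 "E*t^2/2"]
    by (rule has_bochner_integral_cong[THEN iffD1, rotated -1]) (simp_all add: field_simps)
  moreover have "has_bochner_integral lborel
      (\<lambda>x. normal_density 0 1 x * (E * (1 + t^2 * (x^2 - 1) / 2))) E"
    using has_bochner_integral_normal_density_quadratic[of 0 "E * (1 - t^2/2)" 0 "E*t^2/2"]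
    by (rule has_bochner_integral_cong[THEN iffD1, rotated -1]) (simp_all add: field_simps)
  moreover have "has_bochner_integral lborel (\<lambda>x. normal_density 0 1 x * cosh (t*x)) E"
    using has_bochner_integral_std_normal_cosh_quadratic[of t 1 0 0] by (simp add: E_def)
  ultimately show ?thesis
    using nn_integral_mult_density_less_sq[OF normal_density_pos q_nonneg cosh_real_nonneg _
        has_bochner_integral_std_normal_cosh_minus_quadratic_taylor_sq[of t, folded E_def] _ _
        chi2[unfolded has_chi2_normal_def] \<open>1 < E\<close> D_pos]
    by (simp add: exp_sq_half_powers(1) flip: E_def)
qed

lemma (in prob_space) distributed_enn2real_density:
  assumes "distributed M N X f"
  shows "distributed M N X (\<lambda>x. ennreal (enn2real (f x)))"
proof -
  have [measurable]: "f \<in> borel_measurable N"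
    using assms by (simp add: distributed_def)
  have "(\<integral>\<^sup>+x. f x \<partial>N) = emeasure M (space M)"
    using distributed_nn_integral[OF assms, of "\<lambda>_. 1"] by simp
  then have "AE x in N. f x \<noteq> \<infinity>"
    by (intro nn_integral_PInf_AE) (simp_all add: emeasure_space_1)
  then have "AE x in N. f x = ennreal (enn2real (f x))"
    by eventually_elim (simp add: ennreal_enn2real_if)
  then show ?thesis
    by (rule distributed_cong_density[THEN iffD1, OF _ _ _ assms]) simp_all
qed

lemma distributed_has_bochner_integral:
  fixes q g :: "real \<Rightarrow> real"
  assumes "distributed M lborel Y (\<lambda>x. ennreal (q x))" and "\<And>x. 0 \<le> q x"
    and "g \<in> borel_measurable borel" and "integrable M (\<lambda>\<omega>. g (Y \<omega>))"
  shows "has_bochner_integral lborel (\<lambda>x. q x * g x) (\<integral>\<omega>. g (Y \<omega>) \<partial>M)"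
  using distributed_integrable[OF assms(1), of g] distributed_integral[OF assms(1), of g] assms(2-4)
  by (simp add: has_bochner_integral_iff)

lemma distributed_nn_integral_real:
  fixes q g :: "real \<Rightarrow> real"
  assumes "distributed M lborel Y (\<lambda>x. ennreal (q x))" and "\<And>x. 0 \<le> q x"
    and "g \<in> borel_measurable borel" and "\<And>x. 0 \<le> g x"
  shows "(\<integral>\<^sup>+\<omega>. ennreal (g (Y \<omega>)) \<partial>M) = (\<integral>\<^sup>+x. ennreal (g x * q x) \<partial>lborel)"
  using distributed_nn_integral[OF assms(1), of "\<lambda>x. ennreal (g x)"] assms(2-4)
  by (simp add: ennreal_mult'' mult.commute)

lemma chi2_normal_finiteE:
  assumes "chi2_normal M Y \<noteq> \<infinity>"
  obtains p where "distributed M lborel Y p"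
    and "chi2_normal M Y = (\<integral>\<^sup>+x. ennreal ((enn2real (p x) / normal_density 0 1 x - 1)^2
          * normal_density 0 1 x) \<partial>lborel)"
proof -
  have ex: "\<exists>p. distributed M lborel Y p"
  proof (rule ccontr)
    assume "\<not> ?thesis"
    then have "chi2_normal M Y = \<infinity>"
      unfolding chi2_normal_def by (rule if_not_P)
    with assms show False ..
  qed
  with that someI_ex[OF ex] show thesis
    by (simp add: chi2_normal_def Let_def std_normal_density_eq_normal_density)
qed

lemma chi2_normal_lessE:
  assumes "prob_space M" and "chi2_normal M Y < ennreal c"
  obtains q C where "distributed M lborel Y (\<lambda>x. ennreal (q x))" and "\<And>x. 0 \<le> q x"
    and "has_bochner_integral lborel q 1" and "has_chi2_normal q C" and "C < c"
proof -
  interpret prob_space M by fact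
  have "chi2_normal M Y \<noteq> \<infinity>"
    using assms(2) by auto
  then obtain p where p: "distributed M lborel Y p"
    and chi2: "chi2_normal M Y = (\<integral>\<^sup>+x. ennreal ((enn2real (p x) / normal_density 0 1 x - 1)^2
          * normal_density 0 1 x) \<partial>lborel)"
    by (rule chi2_normal_finiteE)
  define q where "q x = enn2real (p x)" for x
  have [measurable]: "p \<in> borel_measurable borel"
    using p by (simp add: distributed_def)
  have density: "distributed M lborel Y (\<lambda>x. ennreal (q x))"
    unfolding q_def by (rule distributed_enn2real_density[OF p])
  have q_nonneg: "0 \<le> q x" for x
    by (simp add: q_def)
  have "has_bochner_integral lborel (\<lambda>x. q x * 1) (\<integral>\<omega>. 1 \<partial>M)"
    by (rule distributed_has_bochner_integral[OF density q_nonneg]) simp_all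
  then have mass: "has_bochner_integral lborel q 1"
    by (simp add: prob_space)
  define K where "K = chi2_normal M Y"
  have "K < \<top>"
    using assms(2) ennreal_less_top unfolding K_def by (rule order.strict_trans)
  then have K: "K = ennreal (enn2real K)"
    by (simp add: ennreal_enn2real_if)
  with assms(2) have "enn2real K < c"
    unfolding K_def by (metis enn2real_nonneg ennreal_less_iff)
  have "has_chi2_normal q (enn2real K)"
    unfolding has_chi2_normal_def q_def
    by (rule has_bochner_integral_nn_integral) (simp_all flip: chi2 K_def K)
  with that density q_nonneg mass \<open>enn2real K < c\<close> show thesis
    by blast
qed

lemma nn_integral_exp_eq_cosh_of_symmetric:
  fixes Y :: "'a \<Rightarrow> real"
  assumes [measurable]: "Y \<in> borel_measurable M"
    and symmetric: "distr M borel (\<lambda>\<omega>. - Y \<omega>) = distr M borel Y"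
  shows "(\<integral>\<^sup>+\<omega>. ennreal (exp (t * Y \<omega>)) \<partial>M) = (\<integral>\<^sup>+\<omega>. ennreal (cosh (t * Y \<omega>)) \<partial>M)"
proof -
  define I where "I = (\<integral>\<^sup>+\<omega>. ennreal (exp (t * Y \<omega>) / 2) \<partial>M)"
  have "(\<integral>\<^sup>+\<omega>. ennreal (exp (- (t * Y \<omega>)) / 2) \<partial>M)
      = (\<integral>\<^sup>+y. ennreal (exp (t * y) / 2) \<partial>distr M borel (\<lambda>\<omega>. - Y \<omega>))"
    by (simp add: nn_integral_distr)
  also have "\<dots> = I"
    unfolding symmetric I_def by (simp add: nn_integral_distr)
  finally have reflected: "(\<integral>\<^sup>+\<omega>. ennreal (exp (- (t * Y \<omega>)) / 2) \<partial>M) = I" .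
  have "(\<integral>\<^sup>+\<omega>. ennreal (exp (t * Y \<omega>)) \<partial>M)
      = (\<integral>\<^sup>+\<omega>. ennreal (exp (t * Y \<omega>) / 2) + ennreal (exp (t * Y \<omega>) / 2) \<partial>M)"
    by (intro nn_integral_cong) (simp flip: ennreal_plus)
  also have "\<dots> = I + I"
    unfolding I_def by (rule nn_integral_add) auto
  also have "\<dots> = I + (\<integral>\<^sup>+\<omega>. ennreal (exp (- (t * Y \<omega>)) / 2) \<partial>M)"
    by (simp only: reflected)
  also have "\<dots> = (\<integral>\<^sup>+\<omega>. ennreal (exp (t * Y \<omega>) / 2) + ennreal (exp (- (t * Y \<omega>)) / 2) \<partial>M)"
    unfolding I_def by (rule nn_integral_add[symmetric]) auto
  also have "\<dots> = (\<integral>\<^sup>+\<omega>. ennreal (cosh (t * Y \<omega>)) \<partial>M)"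
    by (intro nn_integral_cong) (simp add: cosh_field_def add_divide_distrib flip: ennreal_plus)
  finally show ?thesis .
qed

lemma nn_integral_exp_less_of_mean_zero:
  fixes Y :: "'a \<Rightarrow> real"
  assumes "prob_space M" and "integrable M Y" "(\<integral>\<omega>. Y \<omega> \<partial>M) = 0"
    and "chi2_normal M Y < ennreal const1" and "t \<noteq> 0"
  shows "(\<integral>\<^sup>+\<omega>. ennreal (exp (t * Y \<omega>)) \<partial>M) < ennreal (exp (t^2))"
proof -
  obtain q C where density: "distributed M lborel Y (\<lambda>x. ennreal (q x))" and q_nonneg: "\<And>x. 0 \<le> q x"
    and mass: "has_bochner_integral lborel q 1" and "has_chi2_normal q C" "C < const1"
    using chi2_normal_lessE[OF assms(1,4)] by blast
  have "has_bochner_integral lborel (\<lambda>x. q x * x) 0"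
    using distributed_has_bochner_integral[OF density q_nonneg, of "\<lambda>x. x"] assms(2,3) by simp
  then show ?thesis
    using nn_integral_exp_density_less_of_mean_zero[OF q_nonneg \<open>has_chi2_normal q C\<close>
        \<open>C < const1\<close> mass]
      distributed_nn_integral_real[OF density q_nonneg, of "\<lambda>x. exp (t*x)"] \<open>t \<noteq> 0\<close>
    by simp
qed

lemma nn_integral_exp_less_of_standardized:
  fixes Y :: "'a \<Rightarrow> real"
  assumes "prob_space M" and "integrable M Y" "(\<integral>\<omega>. Y \<omega> \<partial>M) = 0"
    and "integrable M (\<lambda>\<omega>. (Y \<omega>)^2)" "(\<integral>\<omega>. (Y \<omega>)^2 \<partial>M) = 1"
    and "chi2_normal M Y < ennreal const2" and "t \<noteq> 0"
  shows "(\<integral>\<^sup>+\<omega>. ennreal (exp (t * Y \<omega>)) \<partial>M) < ennreal (exp (t^2))"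
proof -
  obtain q C where density: "distributed M lborel Y (\<lambda>x. ennreal (q x))" and q_nonneg: "\<And>x. 0 \<le> q x"
    and mass: "has_bochner_integral lborel q 1" and "has_chi2_normal q C" "C < const2"
    using chi2_normal_lessE[OF assms(1,6)] by blast
  have "has_bochner_integral lborel (\<lambda>x. q x * x) 0" "has_bochner_integral lborel (\<lambda>x. q x * x^2) 1"
    using distributed_has_bochner_integral[OF density q_nonneg, of "\<lambda>x. x"]
      distributed_has_bochner_integral[OF density q_nonneg, of "\<lambda>x. x^2"] assms(2-5)
    by simp_all
  then show ?thesis
    using nn_integral_exp_density_less_of_standardized[OF q_nonneg \<open>has_chi2_normal q C\<close>
        \<open>C < const2\<close> mass _ _ \<open>t \<noteq> 0\<close>]
      distributed_nn_integral_real[OF density q_nonneg, of "\<lambda>x. exp (t*x)"]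
    by simp
qed

lemma nn_integral_exp_less_of_symmetric:
  fixes Y :: "'a \<Rightarrow> real"
  assumes "prob_space M" and "Y \<in> borel_measurable M"
    and "distr M borel (\<lambda>\<omega>. - Y \<omega>) = distr M borel Y"
    and "integrable M Y" "(\<integral>\<omega>. Y \<omega> \<partial>M) = 0"
    and "integrable M (\<lambda>\<omega>. (Y \<omega>)^2)" "(\<integral>\<omega>. (Y \<omega>)^2 \<partial>M) = 1"
    and "chi2_normal M Y < ennreal const3" and "t \<noteq> 0"
  shows "(\<integral>\<^sup>+\<omega>. ennreal (exp (t * Y \<omega>)) \<partial>M) < ennreal (exp (t^2))"
proof -
  obtain q C where density: "distributed M lborel Y (\<lambda>x. ennreal (q x))" and q_nonneg: "\<And>x. 0 \<le> q x"
    and mass: "has_bochner_integral lborel q 1" and "has_chi2_normal q C" "C < const3"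
    using chi2_normal_lessE[OF assms(1,8)] by blast
  have "has_bochner_integral lborel (\<lambda>x. q x * x) 0" "has_bochner_integral lborel (\<lambda>x. q x * x^2) 1"
    using distributed_has_bochner_integral[OF density q_nonneg, of "\<lambda>x. x"]
      distributed_has_bochner_integral[OF density q_nonneg, of "\<lambda>x. x^2"] assms(4-7)
    by simp_all
  moreover have "(\<lambda>x. cosh (t*x)) \<in> borel_measurable borel"
    by (intro borel_measurable_continuous_onI continuous_intros)
  ultimately show ?thesis
    using nn_integral_cosh_density_less_of_standardized[OF q_nonneg \<open>has_chi2_normal q C\<close>
        \<open>C < const3\<close> mass _ _ \<open>t \<noteq> 0\<close>]
      distributed_nn_integral_real[OF density q_nonneg, of "\<lambda>x. cosh (t*x)"]
      nn_integral_exp_eq_cosh_of_symmetric[OF assms(2,3)]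
    by simp
qed

theorem corollary2:
  fixes M :: "'a measure" and Y :: "'a \<Rightarrow> real"
  assumes "prob_space M"
    and "Y \<in> borel_measurable M"
    and "(integrable M Y \<and> (\<integral>\<omega>. Y \<omega> \<partial>M) = 0
            \<and> chi2_normal M Y < ennreal const1)
         \<or> (integrable M Y \<and> (\<integral>\<omega>. Y \<omega> \<partial>M) = 0
            \<and> integrable M (\<lambda>\<omega>. (Y \<omega>)^2) \<and> (\<integral>\<omega>. (Y \<omega>)^2 \<partial>M) = 1
            \<and> chi2_normal M Y < ennreal const2)
         \<or> (distr M borel (\<lambda>\<omega>. - Y \<omega>) = distr M borel Y
            \<and> integrable M Y \<and> (\<integral>\<omega>. Y \<omega> \<partial>M) = 0
            \<and> integrable M (\<lambda>\<omega>. (Y \<omega>)^2) \<and> (\<integral>\<omega>. (Y \<omega>)^2 \<partial>M) = 1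
            \<and> chi2_normal M Y < ennreal const3)"
  shows "\<forall>t::real. t \<noteq> 0 \<longrightarrow>
           (\<integral>\<^sup>+ \<omega>. ennreal (exp (t * Y \<omega>)) \<partial>M) < ennreal (exp (t^2))"
proof (intro allI impI)
  fix t :: real
  assume "t \<noteq> 0"
  from assms(3) show "(\<integral>\<^sup>+\<omega>. ennreal (exp (t * Y \<omega>)) \<partial>M) < ennreal (exp (t^2))"
    by (elim disjE conjE)
       (rule nn_integral_exp_less_of_mean_zero[OF assms(1) _ _ _ \<open>t \<noteq> 0\<close>]
         nn_integral_exp_less_of_standardized[OF assms(1) _ _ _ _ _ \<open>t \<noteq> 0\<close>]
         nn_integral_exp_less_of_symmetric[OF assms(1,2) _ _ _ _ _ _ \<open>t \<noteq> 0\<close>];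
        assumption)+
qed

end
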